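(* Let $N_1,N_2,N_3\ge 0$ be integers. The set of support hyperplanes of the convex set $Q(N_1,N_2,N_3)$ coincides with the set of hyperplanes $\{f: L_\Phi(f)=0\}$, where $\Phi\in P(N_1,N_2,N_3)$ and the associated matrix $A(N_1,N_2,N_3)$ satisfies $\det A(N_1,N_2,N_3)=0$.
   Context: For integers $N_1,N_2,N_3\ge0$, $\sigma(N_1,N_2,N_3)$ is the set of trigonometric polynomials $f(\alpha,\beta,\gamma)=\sum_{|k|\le N_1}\sum_{|\ell|\le N_2}\sum_{|m|\le N_3} q(k,\ell,m)e^{i(k\alpha+\ell\beta+m\gamma)}$ (complex coefficients) with $f(\alpha,\beta,\gamma)\ge0$ for all real $\alpha,\beta,\gamma$. $Q(N_1,N_2,N_3)$ is the set of $f\in\sigma(N_1,N_2,N_3)$ that can be written $f=\sum_{j=1}^r|F_j|^2$ with $F_j(\alpha,\beta,\gamma)=\sum_{0\le k\le N_1}\sum_{0\le \ell\le N_2}\sum_{0\le m\le N_3}q_j(k,\ell,m)e^{i(k\alpha+\ell\beta+m\gamma)}$. These are convex subsets of the real vector space of real-valued trigonometric polynomials with frequencies $(k,\ell,m)$, $|k|\le N_1,|\ell|\le N_2,|m|\le N_3$. Let $S=\{(k,\ell,m)\in\mathbb Z^3:0\le k\le N_1,0\le\ell\le N_2,0\le m\le N_3\}$ and $\Delta=S-S=\{(k,\ell,m):|k|\le N_1,|\ell|\le N_2,|m|\le N_3\}$. $P(N_1,N_2,N_3)$ is the class of functions $\Phi:\Delta\to\mathbb C$ that are Hermitian positive, i.e.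 $\sum_{i,j}\xi_i\bar\xi_j\Phi(x_i-x_j)\ge0$ for all $x_1,\dots,x_n\in S$ and $\xi_1,\dots,\xi_n\in\mathbb C$. For such $\Phi$, $L_\Phi(f)=\sum_{|k|\le N_1}\sum_{|\ell|\le N_2}\sum_{|m|\le N_3}q(k,\ell,m)\Phi(k,\ell,m)$, and $A(N_1,N_2,N_3)$ is the matrix with rows and columns indexed by $S$ (ordered lexicographically) whose entry in row $x$, column $y$ is $\Phi(y-x)$. A hyperplane $\{f:L(f)=c\}$ ($L$ a nonzero real linear functional) supports a set $U$ if $L(f)\ge c$ for all $f\in U$ or $L(f)\le c$ for all $f\in U$, and $L(f_0)=c$ for some $f_0\in U$. *)

theory Defs
  imports Complex_Main "HOL-Library.Complex_Order" "Jordan_Normal_Form.Determinant"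
begin

type_synonym freq = "int \<times> int \<times> int"

text \<open>Frequency box Delta = S - S and the index set S.\<close>
definition Delta :: "nat \<Rightarrow> nat \<Rightarrow> nat \<Rightarrow> freq set" where
  "Delta N1 N2 N3 = {(k,l,m). \<bar>k\<bar> \<le> int N1 \<and> \<bar>l\<bar> \<le> int N2 \<and> \<bar>m\<bar> \<le> int N3}"

definition Sset :: "nat \<Rightarrow> nat \<Rightarrow> nat \<Rightarrow> freq set" where
  "Sset N1 N2 N3 = {(k,l,m). 0 \<le> k \<and> k \<le> int N1 \<and> 0 \<le> l \<and> l \<le> int N2 \<and> 0 \<le> m \<and> m \<le> int N3}"

definition fdiff :: "freq \<Rightarrow> freq \<Rightarrow> freq" where
  "fdiff x y = (fst x - fst y, fst (snd x) - fst (snd y), snd (snd x) - snd (snd y))"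

definition trig_eval :: "freq set \<Rightarrow> (freq \<Rightarrow> complex) \<Rightarrow> real \<times> real \<times> real \<Rightarrow> complex" where
  "trig_eval D q \<theta> = (\<Sum>(k,l,m)\<in>D. q (k,l,m) *
      exp (\<i> * complex_of_real (of_int k * fst \<theta> + of_int l * fst (snd \<theta>) + of_int m * snd (snd \<theta>))))"

text \<open>The ambient real vector space: real-valued trigonometric polynomials with frequencies in Delta
  (represented by their coefficient functions, vanishing outside Delta).\<close>
definition Vsp :: "nat \<Rightarrow> nat \<Rightarrow> nat \<Rightarrow> (freq \<Rightarrow> complex) set" where
  "Vsp N1 N2 N3 = {q. (\<forall>k. k \<notin> Delta N1 N2 N3 \<longrightarrow> q k = 0) \<and>
                      (\<forall>\<theta>. trig_eval (Delta N1 N2 N3) q \<theta> \<in> \<real>)}"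

definition Qset :: "nat \<Rightarrow> nat \<Rightarrow> nat \<Rightarrow> (freq \<Rightarrow> complex) set" where
  "Qset N1 N2 N3 = {q \<in> Vsp N1 N2 N3. \<exists>(r::nat) (F :: nat \<Rightarrow> freq \<Rightarrow> complex).
      (\<forall>j<r. \<forall>k. k \<notin> Sset N1 N2 N3 \<longrightarrow> F j k = 0) \<and>
      (\<forall>\<theta>. trig_eval (Delta N1 N2 N3) q \<theta> =
            (\<Sum>j<r. complex_of_real ((cmod (trig_eval (Sset N1 N2 N3) (F j) \<theta>))\<^sup>2)))}"

definition herm_pos :: "nat \<Rightarrow> nat \<Rightarrow> nat \<Rightarrow> (freq \<Rightarrow> complex) \<Rightarrow> bool" where
  "herm_pos N1 N2 N3 \<Phi> = (\<forall>(n::nat) (x :: nat \<Rightarrow> freq) (\<xi> :: nat \<Rightarrow> complex).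
      (\<forall>i<n. x i \<in> Sset N1 N2 N3) \<longrightarrow>
      0 \<le> (\<Sum>i<n. \<Sum>j<n. \<xi> i * cnj (\<xi> j) * \<Phi> (fdiff (x i) (x j))))"

definition LPhi :: "nat \<Rightarrow> nat \<Rightarrow> nat \<Rightarrow> (freq \<Rightarrow> complex) \<Rightarrow> (freq \<Rightarrow> complex) \<Rightarrow> complex" where
  "LPhi N1 N2 N3 \<Phi> q = (\<Sum>k\<in>Delta N1 N2 N3. q k * \<Phi> k)"

text \<open>Lexicographic enumeration of S: index i < (N1+1)(N2+1)(N3+1).\<close>
definition sidx :: "nat \<Rightarrow> nat \<Rightarrow> nat \<Rightarrow> freq" where
  "sidx N2 N3 i = (int (i div ((N2+1)*(N3+1))), int ((i div (N3+1)) mod (N2+1)), int (i mod (N3+1)))"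

definition Amat :: "nat \<Rightarrow> nat \<Rightarrow> nat \<Rightarrow> (freq \<Rightarrow> complex) \<Rightarrow> complex mat" where
  "Amat N1 N2 N3 \<Phi> = mat ((N1+1)*(N2+1)*(N3+1)) ((N1+1)*(N2+1)*(N3+1))
      (\<lambda>(i,j). \<Phi> (fdiff (sidx N2 N3 j) (sidx N2 N3 i)))"

definition real_lin_functional :: "(freq \<Rightarrow> complex) set \<Rightarrow> ((freq \<Rightarrow> complex) \<Rightarrow> real) \<Rightarrow> bool" where
  "real_lin_functional V L = ((\<forall>p\<in>V. \<forall>q\<in>V. \<forall>a b :: real.
        L (\<lambda>k. complex_of_real a * p k + complex_of_real b * q k) = a * L p + b * L q)
      \<and> (\<exists>q\<in>V. L q \<noteq> 0))"

definition supports :: "(freq \<Rightarrow> complex) set \<Rightarrow> ((freq \<Rightarrow> complex) \<Rightarrow> real) \<Rightarrow> real \<Rightarrow> bool" where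
  "supports U L c = (((\<forall>f\<in>U. c \<le> L f) \<or> (\<forall>f\<in>U. L f \<le> c)) \<and> (\<exists>f0\<in>U. L f0 = c))"

end

theory Submission
  imports Defs
begin

text \<open>
  Coefficients of a trigonometric polynomial are unique (Kronecker substitution reduces this to one
  variable, where averaging over roots of unity extracts them), so the real trigonometric polynomials
  are those with Hermitian-symmetric coefficients, and every real-linear functional on them is
  \<open>f \<mapsto> L\<^sub>\<Phi>(f)\<close> for a Hermitian \<open>\<Phi>\<close>.  The elements of \<open>Q\<close> are exactly the sums of
  autocorrelations of coefficient vectors \<open>F\<close> on \<open>S\<close>, and \<open>L\<^sub>\<Phi>\<close> of the autocorrelation of \<open>F\<close> is the
  Hermitian form \<open>F\<^sup>* A F\<close>.  Since \<open>Q\<close> is a cone containing \<open>0\<close>, a hyperplane supporting it passes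
  through \<open>0\<close>, and after a sign change its functional is nonnegative on \<open>Q\<close>, which says exactly that
  \<open>A\<close> is positive semidefinite, i.e. \<open>\<Phi> \<in> P\<close>.  The hyperplane touches \<open>Q\<close> in a nonzero point iff
  \<open>F\<^sup>* A F = 0\<close> for some \<open>F \<noteq> 0\<close>, which for positive semidefinite \<open>A\<close> means \<open>A F = 0\<close>, i.e.
  \<open>det A = 0\<close>.
\<close>

section \<open>Uniqueness of coefficients\<close>

lemma cis_ne_1_of_int_div:
  fixes n :: int and M :: nat
  assumes "n \<noteq> 0" "\<bar>n\<bar> < int M"
  shows "cis (2 * pi * of_int n / real M) \<noteq> 1"
proof
  assume "cis (2 * pi * of_int n / real M) = 1"
  then have "cos (2 * pi * of_int n / real M) = 1"
    by (simp add: complex_eq_iff)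
  then obtain j :: int where "2 * pi * of_int n / real M = of_int j * 2 * pi"
    using cos_one_2pi_int by blast
  then have "of_int n = (of_int (j * int M) :: real)"
    using assms by (simp add: field_simps)
  then have "n = j * int M"
    by (simp only: of_int_eq_iff)
  with assms show False
    by (cases "j = 0") (auto simp: abs_mult)
qed

lemma sum_cis_roots_of_unity_eq_0:
  fixes n :: int and M :: nat
  assumes "n \<noteq> 0" "\<bar>n\<bar> < int M"
  shows "(\<Sum>a<M. cis (2 * pi * real a * of_int n / real M)) = 0"
proof -
  define w where "w = cis (2 * pi * of_int n / real M)"
  have "w \<noteq> 1"
    unfolding w_def using assms by (rule cis_ne_1_of_int_div)
  have "w ^ M = cis (2 * pi * of_int n)"
    using assms unfolding w_def DeMoivre by simp
  also have "\<dots> = 1"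
    by simp
  finally have "w ^ M = 1" .
  have "(\<Sum>a<M. cis (2 * pi * real a * of_int n / real M)) = (\<Sum>a<M. w ^ a)"
    unfolding w_def DeMoivre by (simp add: mult_ac)
  also have "\<dots> = 0"
    using \<open>w \<noteq> 1\<close> \<open>w ^ M = 1\<close> by (simp add: geometric_sum)
  finally show ?thesis .
qed

lemma cis_sum_coeff_extract:
  fixes \<phi> :: "'k \<Rightarrow> int" and M :: nat
  assumes "finite D" "inj_on \<phi> D"
    and bounded: "\<And>k k'. k \<in> D \<Longrightarrow> k' \<in> D \<Longrightarrow> \<bar>\<phi> k - \<phi> k'\<bar> < int M"
    and "k0 \<in> D"
  shows "(\<Sum>a<M. (\<Sum>k\<in>D. c k * cis (of_int (\<phi> k) * (2 * pi * real a / real M)))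
                  * cis (- of_int (\<phi> k0) * (2 * pi * real a / real M)))
         = of_nat M * c k0"
proof -
  have shift: "c k * cis (of_int (\<phi> k) * (2 * pi * real a / real M))
        * cis (- of_int (\<phi> k0) * (2 * pi * real a / real M))
      = c k * cis (2 * pi * real a * of_int (\<phi> k - \<phi> k0) / real M)" for k a
    by (simp add: mult.assoc cis_mult algebra_simps diff_divide_distrib)
  have "(\<Sum>a<M. (\<Sum>k\<in>D. c k * cis (of_int (\<phi> k) * (2 * pi * real a / real M)))
                  * cis (- of_int (\<phi> k0) * (2 * pi * real a / real M)))
      = (\<Sum>a<M. \<Sum>k\<in>D. c k * cis (2 * pi * real a * of_int (\<phi> k - \<phi> k0) / real M))"
    unfolding sum_distrib_right shift ..
  also have "\<dots> = (\<Sum>k\<in>D. c k * (\<Sum>a<M. cis (2 * pi * real a * of_int (\<phi> k - \<phi> k0) / real M)))"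
    unfolding sum_distrib_left by (rule sum.swap)
  also have "\<dots> = (\<Sum>k\<in>D. if k = k0 then of_nat M * c k else 0)"
  proof (rule sum.cong[OF refl])
    fix k assume "k \<in> D"
    show "c k * (\<Sum>a<M. cis (2 * pi * real a * of_int (\<phi> k - \<phi> k0) / real M))
        = (if k = k0 then of_nat M * c k else 0)"
    proof (cases "k = k0")
      case False
      then have "\<phi> k - \<phi> k0 \<noteq> 0"
        using \<open>inj_on \<phi> D\<close> \<open>k \<in> D\<close> \<open>k0 \<in> D\<close> by (auto simp: inj_on_def)
      with False show ?thesis
        using sum_cis_roots_of_unity_eq_0[OF _ bounded[OF \<open>k \<in> D\<close> \<open>k0 \<in> D\<close>]] by simp
    qed simp
  qed
  also have "\<dots> = of_nat M * c k0"
    using assms by (simp add: sum.delta)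
  finally show ?thesis .
qed

lemma cis_sum_coeffs_unique:
  fixes \<phi> :: "'k \<Rightarrow> int" and M :: nat
  assumes "finite D" "inj_on \<phi> D"
    and "\<And>k k'. k \<in> D \<Longrightarrow> k' \<in> D \<Longrightarrow> \<bar>\<phi> k - \<phi> k'\<bar> < int M"
    and eq: "\<And>t. (\<Sum>k\<in>D. c k * cis (of_int (\<phi> k) * t)) = (\<Sum>k\<in>D. d k * cis (of_int (\<phi> k) * t))"
    and "k0 \<in> D"
  shows "c k0 = d k0"
proof -
  have "M > 0"
    using assms(3)[OF \<open>k0 \<in> D\<close> \<open>k0 \<in> D\<close>] by simp
  moreover have "of_nat M * c k0 = of_nat M * d k0"
    using cis_sum_coeff_extract[OF assms(1-3,5), of c] cis_sum_coeff_extract[OF assms(1-3,5), of d]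
    by (simp only: eq)
  ultimately show ?thesis
    by simp
qed

definition phase :: "freq \<Rightarrow> real \<times> real \<times> real \<Rightarrow> real" where
  "phase k \<theta> = of_int (fst k) * fst \<theta> + of_int (fst (snd k)) * fst (snd \<theta>) + of_int (snd (snd k)) * snd (snd \<theta>)"

lemma trig_eval_eq_cis_sum: "trig_eval D q \<theta> = (\<Sum>k\<in>D. q k * cis (phase k \<theta>))"
  unfolding trig_eval_def
  by (rule sum.cong[OF refl]) (auto simp: phase_def cis_conv_exp)

lemma Delta_eq: "Delta N1 N2 N3 = {-int N1..int N1} \<times> {-int N2..int N2} \<times> {-int N3..int N3}"
  unfolding Delta_def by auto

lemma finite_Delta [simp]: "finite (Delta N1 N2 N3)"
  unfolding Delta_eq by simp

lemma Sset_eq: "Sset N1 N2 N3 = {0..int N1} \<times> {0..int N2} \<times> {0..int N3}"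
  unfolding Sset_def by auto

lemma finite_Sset [simp]: "finite (Sset N1 N2 N3)"
  unfolding Sset_eq by simp

text \<open>The Kronecker substitution \<open>\<theta> = (t, P t, P Q t)\<close> with \<open>P = 2 N1 + 1\<close>, \<open>Q = 2 N2 + 1\<close> makes a
  polynomial with frequencies in \<open>Delta\<close> univariate without merging frequencies, since \<open>(k, l, m)\<close> are
  the balanced mixed-radix digits of the new frequency.\<close>

definition kronecker :: "nat \<Rightarrow> nat \<Rightarrow> freq \<Rightarrow> int" where
  "kronecker N1 N2 k = fst k + (2 * int N1 + 1) * (fst (snd k) + (2 * int N2 + 1) * snd (snd k))"

lemma radix_digits_eq_0:
  fixes x y P :: int
  assumes "\<bar>x\<bar> < P" "x + P * y = 0"
  shows "x = 0 \<and> y = 0"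
proof (cases "y = 0")
  case False
  moreover have "0 < P"
    using assms(1) abs_ge_zero[of x] by linarith
  ultimately have "P \<le> \<bar>P * y\<bar>"
    by (simp add: abs_mult mult_le_cancel_left1)
  also have "\<bar>P * y\<bar> = \<bar>x\<bar>"
    using assms(2) by (simp add: eq_neg_iff_add_eq_0[symmetric] add.commute)
  finally show ?thesis
    using assms(1) by simp
qed (use assms in simp)

lemma inj_on_kronecker: "inj_on (kronecker N1 N2) (Delta N1 N2 N3)"
proof (rule inj_onI)
  fix a b assume ab: "a \<in> Delta N1 N2 N3" "b \<in> Delta N1 N2 N3" "kronecker N1 N2 a = kronecker N1 N2 b"
  obtain a1 a2 a3 b1 b2 b3 where a: "a = (a1, a2, a3)" and b: "b = (b1, b2, b3)"
    by (cases a, cases b) auto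
  have bounds: "\<bar>a1 - b1\<bar> < 2 * int N1 + 1" "\<bar>a2 - b2\<bar> < 2 * int N2 + 1"
    using ab(1,2) unfolding a b Delta_def by auto
  have "(a1 - b1) + (2 * int N1 + 1) * ((a2 - b2) + (2 * int N2 + 1) * (a3 - b3))
      = kronecker N1 N2 a - kronecker N1 N2 b"
    unfolding a b kronecker_def by (simp add: algebra_simps)
  then have "(a1 - b1) + (2 * int N1 + 1) * ((a2 - b2) + (2 * int N2 + 1) * (a3 - b3)) = 0"
    using ab(3) by simp
  from radix_digits_eq_0[OF bounds(1) this] have "a1 = b1"
    and rest: "(a2 - b2) + (2 * int N2 + 1) * (a3 - b3) = 0" by simp_all
  with radix_digits_eq_0[OF bounds(2) rest] show "a = b"
    unfolding a b by simp
qed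

lemma abs_kronecker_le:
  assumes "k \<in> Delta N1 N2 N3"
  shows "2 * \<bar>kronecker N1 N2 k\<bar> < (2 * int N1 + 1) * (2 * int N2 + 1) * (2 * int N3 + 1)"
proof -
  obtain a b c where k: "k = (a, b, c)" "\<bar>a\<bar> \<le> int N1" "\<bar>b\<bar> \<le> int N2" "\<bar>c\<bar> \<le> int N3"
    using assms unfolding Delta_def by auto
  have "\<bar>b + (2 * int N2 + 1) * c\<bar> \<le> int N2 + (2 * int N2 + 1) * int N3"
    using k by (auto simp: abs_mult intro!: order_trans[OF abs_triangle_ineq] add_mono mult_left_mono)
  then have "\<bar>(2 * int N1 + 1) * (b + (2 * int N2 + 1) * c)\<bar> \<le> (2 * int N1 + 1) * (int N2 + (2 * int N2 + 1) * int N3)"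
    by (simp add: abs_mult)
  then have "\<bar>kronecker N1 N2 k\<bar> \<le> int N1 + (2 * int N1 + 1) * (int N2 + (2 * int N2 + 1) * int N3)"
    using k unfolding kronecker_def by (auto intro: order_trans[OF abs_triangle_ineq])
  then show ?thesis
    by (simp add: algebra_simps)
qed

lemma phase_kronecker:
  "phase k (t, of_int (2 * int N1 + 1) * t, of_int ((2 * int N1 + 1) * (2 * int N2 + 1)) * t)
     = of_int (kronecker N1 N2 k) * t"
  unfolding phase_def kronecker_def by (simp add: algebra_simps)

lemma trig_eval_Delta_coeffs_unique:
  assumes "\<And>\<theta>. trig_eval (Delta N1 N2 N3) q \<theta> = trig_eval (Delta N1 N2 N3) p \<theta>"
    and "k0 \<in> Delta N1 N2 N3"
  shows "q k0 = p k0"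
proof (rule cis_sum_coeffs_unique[OF finite_Delta inj_on_kronecker _ _ \<open>k0 \<in> _\<close>])
  fix k k' assume "k \<in> Delta N1 N2 N3" "k' \<in> Delta N1 N2 N3"
  then show "\<bar>kronecker N1 N2 k - kronecker N1 N2 k'\<bar>
      < int (nat ((2 * int N1 + 1) * (2 * int N2 + 1) * (2 * int N3 + 1)))"
    using abs_kronecker_le[OF \<open>k \<in> _\<close>] abs_kronecker_le[OF \<open>k' \<in> _\<close>]
      abs_triangle_ineq4[of "kronecker N1 N2 k" "kronecker N1 N2 k'"]
    by simp
next
  fix t
  show "(\<Sum>k\<in>Delta N1 N2 N3. q k * cis (of_int (kronecker N1 N2 k) * t))
      = (\<Sum>k\<in>Delta N1 N2 N3. p k * cis (of_int (kronecker N1 N2 k) * t))"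
    using assms(1) unfolding trig_eval_eq_cis_sum phase_kronecker[symmetric] by blast
qed

section \<open>Real trigonometric polynomials and the cone Q\<close>

definition fneg :: "freq \<Rightarrow> freq" where
  "fneg k = (- fst k, - fst (snd k), - snd (snd k))"

lemma fneg_fneg [simp]: "fneg (fneg k) = k"
  unfolding fneg_def by simp

lemma fneg_eq_iff: "fneg j = k \<longleftrightarrow> j = fneg k"
  unfolding fneg_def by auto

lemma fneg_in_Delta_iff [simp]: "fneg k \<in> Delta N1 N2 N3 \<longleftrightarrow> k \<in> Delta N1 N2 N3"
  unfolding fneg_def Delta_def by (cases k) auto

lemma fneg_fdiff: "fneg (fdiff x y) = fdiff y x"
  unfolding fneg_def fdiff_def by simp

lemma fdiff_in_Delta: "x \<in> Sset N1 N2 N3 \<Longrightarrow> y \<in> Sset N1 N2 N3 \<Longrightarrow> fdiff x y \<in> Delta N1 N2 N3"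
  unfolding fdiff_def Sset_def Delta_def by auto

lemma fdiff_eq_0_iff: "fdiff x y = (0, 0, 0) \<longleftrightarrow> x = y"
  unfolding fdiff_def by (auto simp: prod_eq_iff)

lemma phase_fneg: "phase (fneg k) \<theta> = - phase k \<theta>"
  unfolding phase_def fneg_def by simp

lemma phase_fdiff: "phase (fdiff x y) \<theta> = phase x \<theta> - phase y \<theta>"
  unfolding phase_def fdiff_def by (simp add: algebra_simps)

lemma sum_Delta_reindex_fneg: "(\<Sum>k\<in>Delta N1 N2 N3. g (fneg k)) = (\<Sum>k\<in>Delta N1 N2 N3. g k)"
  by (rule sum.reindex_bij_witness[of _ fneg fneg]) auto

lemma cnj_trig_eval_Delta:
  "cnj (trig_eval (Delta N1 N2 N3) q \<theta>) = trig_eval (Delta N1 N2 N3) (\<lambda>k. cnj (q (fneg k))) \<theta>"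
proof -
  have "cnj (trig_eval (Delta N1 N2 N3) q \<theta>) = (\<Sum>k\<in>Delta N1 N2 N3. cnj (q k) * cis (phase (fneg k) \<theta>))"
    unfolding trig_eval_eq_cis_sum by (simp add: cis_cnj phase_fneg)
  also have "\<dots> = trig_eval (Delta N1 N2 N3) (\<lambda>k. cnj (q (fneg k))) \<theta>"
    unfolding trig_eval_eq_cis_sum
    using sum_Delta_reindex_fneg[of "\<lambda>k. cnj (q (fneg k)) * cis (phase k \<theta>)"] by simp
  finally show ?thesis .
qed

lemma Vsp_iff:
  "q \<in> Vsp N1 N2 N3 \<longleftrightarrow> (\<forall>k. k \<notin> Delta N1 N2 N3 \<longrightarrow> q k = 0) \<and> (\<forall>k. q (fneg k) = cnj (q k))"
proof
  assume q: "q \<in> Vsp N1 N2 N3"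
  then have outside: "\<forall>k. k \<notin> Delta N1 N2 N3 \<longrightarrow> q k = 0"
    unfolding Vsp_def by auto
  have "cnj (trig_eval (Delta N1 N2 N3) q \<theta>) = trig_eval (Delta N1 N2 N3) q \<theta>" for \<theta>
    using q unfolding Vsp_def mem_Collect_eq Reals_cnj_iff by blast
  then have "trig_eval (Delta N1 N2 N3) (\<lambda>k. cnj (q (fneg k))) \<theta> = trig_eval (Delta N1 N2 N3) q \<theta>" for \<theta>
    by (metis cnj_trig_eval_Delta)
  then have sym: "cnj (q (fneg k)) = q k" if "k \<in> Delta N1 N2 N3" for k
    by (rule trig_eval_Delta_coeffs_unique[OF _ that])
  have "q (fneg k) = cnj (q k)" for k
  proof (cases "k \<in> Delta N1 N2 N3")
    case True
    then show ?thesis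
      using sym[of "fneg k"] by simp
  qed (simp add: outside)
  with outside show "(\<forall>k. k \<notin> Delta N1 N2 N3 \<longrightarrow> q k = 0) \<and> (\<forall>k. q (fneg k) = cnj (q k))"
    by blast
next
  assume q: "(\<forall>k. k \<notin> Delta N1 N2 N3 \<longrightarrow> q k = 0) \<and> (\<forall>k. q (fneg k) = cnj (q k))"
  then have "\<forall>k. q (fneg k) = cnj (q k)"
    by blast
  then have "(\<lambda>k. cnj (q (fneg k))) = q"
    by (simp add: fun_eq_iff)
  then have "cnj (trig_eval (Delta N1 N2 N3) q \<theta>) = trig_eval (Delta N1 N2 N3) q \<theta>" for \<theta>
    by (simp only: cnj_trig_eval_Delta)
  with q show "q \<in> Vsp N1 N2 N3"
    unfolding Vsp_def mem_Collect_eq Reals_cnj_iff by blast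
qed

lemma zero_in_Vsp: "(\<lambda>_. 0) \<in> Vsp N1 N2 N3"
  unfolding Vsp_iff by simp

lemma real_combination_in_Vsp:
  "\<forall>p\<in>Vsp N1 N2 N3. \<forall>q\<in>Vsp N1 N2 N3. \<forall>a b :: real.
     (\<lambda>k. complex_of_real a * p k + complex_of_real b * q k) \<in> Vsp N1 N2 N3"
proof (intro ballI allI)
  fix p q and a b :: real
  assume "p \<in> Vsp N1 N2 N3" "q \<in> Vsp N1 N2 N3"
  then show "(\<lambda>k. complex_of_real a * p k + complex_of_real b * q k) \<in> Vsp N1 N2 N3"
    unfolding Vsp_iff by auto
qed

definition autocorr :: "nat \<Rightarrow> nat \<Rightarrow> nat \<Rightarrow> (freq \<Rightarrow> complex) \<Rightarrow> freq \<Rightarrow> complex" where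
  "autocorr N1 N2 N3 F k =
     (\<Sum>x\<in>Sset N1 N2 N3. \<Sum>y\<in>Sset N1 N2 N3. if fdiff x y = k then F x * cnj (F y) else 0)"

lemma autocorr_outside_Delta: "k \<notin> Delta N1 N2 N3 \<Longrightarrow> autocorr N1 N2 N3 F k = 0"
  unfolding autocorr_def using fdiff_in_Delta by (auto intro!: sum.neutral)

lemma autocorr_fneg: "autocorr N1 N2 N3 F (fneg k) = cnj (autocorr N1 N2 N3 F k)"
proof -
  have "cnj (autocorr N1 N2 N3 F k)
      = (\<Sum>x\<in>Sset N1 N2 N3. \<Sum>y\<in>Sset N1 N2 N3. if fdiff x y = k then F y * cnj (F x) else 0)"
    unfolding autocorr_def by (simp add: if_distrib mult.commute cong: if_cong)
  also have "\<dots> = (\<Sum>y\<in>Sset N1 N2 N3. \<Sum>x\<in>Sset N1 N2 N3. if fdiff x y = k then F y * cnj (F x) else 0)"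
    by (rule sum.swap)
  also have "\<dots> = autocorr N1 N2 N3 F (fneg k)"
    unfolding autocorr_def by (intro sum.cong refl) (metis fneg_fdiff fneg_fneg)
  finally show ?thesis
    by simp
qed

lemma autocorr_scale: "autocorr N1 N2 N3 (\<lambda>x. c * F x) k = c * cnj c * autocorr N1 N2 N3 F k"
  unfolding autocorr_def sum_distrib_left by (intro sum.cong refl) (auto simp: mult_ac)

lemma autocorr_at_0: "autocorr N1 N2 N3 F (0, 0, 0) = (\<Sum>x\<in>Sset N1 N2 N3. of_real ((cmod (F x))\<^sup>2))"
  unfolding autocorr_def fdiff_eq_0_iff complex_norm_square by (simp add: sum.delta)

lemma autocorr_eq_0_iff: "autocorr N1 N2 N3 F = (\<lambda>_. 0) \<longleftrightarrow> (\<forall>x\<in>Sset N1 N2 N3. F x = 0)"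
proof
  assume "autocorr N1 N2 N3 F = (\<lambda>_. 0)"
  then have "(\<Sum>x\<in>Sset N1 N2 N3. complex_of_real ((cmod (F x))\<^sup>2)) = 0"
    by (metis autocorr_at_0)
  then have "(\<Sum>x\<in>Sset N1 N2 N3. (cmod (F x))\<^sup>2) = 0"
    by (simp only: of_real_sum[symmetric] of_real_eq_0_iff)
  then show "\<forall>x\<in>Sset N1 N2 N3. F x = 0"
    by (simp add: sum_nonneg_eq_0_iff)
qed (auto simp: autocorr_def fun_eq_iff intro!: sum.neutral)

lemma trig_eval_autocorr:
  "trig_eval (Delta N1 N2 N3) (autocorr N1 N2 N3 F) \<theta> = of_real ((cmod (trig_eval (Sset N1 N2 N3) F \<theta>))\<^sup>2)"
proof -
  have "of_real ((cmod (trig_eval (Sset N1 N2 N3) F \<theta>))\<^sup>2)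
      = (\<Sum>x\<in>Sset N1 N2 N3. \<Sum>y\<in>Sset N1 N2 N3. F x * cnj (F y) * cis (phase (fdiff x y) \<theta>))"
    unfolding complex_norm_square trig_eval_eq_cis_sum cnj_sum sum_product
    by (intro sum.cong refl) (simp add: phase_fdiff cis_cnj mult_ac cis_mult)
  also have "\<dots> = (\<Sum>x\<in>Sset N1 N2 N3. \<Sum>y\<in>Sset N1 N2 N3. \<Sum>k\<in>Delta N1 N2 N3.
        if fdiff x y = k then F x * cnj (F y) * cis (phase k \<theta>) else 0)"
    using fdiff_in_Delta by (intro sum.cong refl) (simp add: sum.delta)
  also have "\<dots> = (\<Sum>x\<in>Sset N1 N2 N3. \<Sum>k\<in>Delta N1 N2 N3. \<Sum>y\<in>Sset N1 N2 N3.
        if fdiff x y = k then F x * cnj (F y) * cis (phase k \<theta>) else 0)"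
    by (rule sum.cong[OF refl]) (rule sum.swap)
  also have "\<dots> = (\<Sum>k\<in>Delta N1 N2 N3. \<Sum>x\<in>Sset N1 N2 N3. \<Sum>y\<in>Sset N1 N2 N3.
        if fdiff x y = k then F x * cnj (F y) * cis (phase k \<theta>) else 0)"
    by (rule sum.swap)
  also have "\<dots> = trig_eval (Delta N1 N2 N3) (autocorr N1 N2 N3 F) \<theta>"
    unfolding trig_eval_eq_cis_sum autocorr_def sum_distrib_right
    by (intro sum.cong refl) (simp add: if_distrib)
  finally show ?thesis ..
qed

lemma trig_eval_sum_autocorr:
  "trig_eval (Delta N1 N2 N3) (\<lambda>k. \<Sum>j<(r::nat). autocorr N1 N2 N3 (F j) k) \<theta>
     = (\<Sum>j<r. of_real ((cmod (trig_eval (Sset N1 N2 N3) (F j) \<theta>))\<^sup>2))"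
proof -
  have "trig_eval (Delta N1 N2 N3) (\<lambda>k. \<Sum>j<r. autocorr N1 N2 N3 (F j) k) \<theta>
      = (\<Sum>j<r. trig_eval (Delta N1 N2 N3) (autocorr N1 N2 N3 (F j)) \<theta>)"
    unfolding trig_eval_eq_cis_sum sum_distrib_right by (rule sum.swap)
  then show ?thesis
    by (simp only: trig_eval_autocorr)
qed

lemma sum_autocorr_in_Qset: "(\<lambda>k. \<Sum>j<(r::nat). autocorr N1 N2 N3 (F j) k) \<in> Qset N1 N2 N3"
proof -
  define G where "G j k = (if k \<in> Sset N1 N2 N3 then F j k else 0)" for j k
  have "trig_eval (Sset N1 N2 N3) (G j) = trig_eval (Sset N1 N2 N3) (F j)" for j
    unfolding trig_eval_def G_def by (intro ext sum.cong) auto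
  then have eval: "trig_eval (Delta N1 N2 N3) (\<lambda>k. \<Sum>j<r. autocorr N1 N2 N3 (F j) k) \<theta>
      = (\<Sum>j<r. of_real ((cmod (trig_eval (Sset N1 N2 N3) (G j) \<theta>))\<^sup>2))" for \<theta>
    unfolding trig_eval_sum_autocorr by simp
  have supp: "\<forall>j<r. \<forall>k. k \<notin> Sset N1 N2 N3 \<longrightarrow> G j k = 0"
    by (simp add: G_def)
  have ex: "\<exists>(r'::nat) G. (\<forall>j<r'. \<forall>k. k \<notin> Sset N1 N2 N3 \<longrightarrow> G j k = 0) \<and>
      (\<forall>\<theta>. trig_eval (Delta N1 N2 N3) (\<lambda>k. \<Sum>j<r. autocorr N1 N2 N3 (F j) k) \<theta>
              = (\<Sum>j<r'. of_real ((cmod (trig_eval (Sset N1 N2 N3) (G j) \<theta>))\<^sup>2)))"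
    by (intro exI[of _ r] exI[of _ G] conjI supp allI eval)
  have "(\<lambda>k. \<Sum>j<r. autocorr N1 N2 N3 (F j) k) \<in> Vsp N1 N2 N3"
    unfolding Vsp_iff by (simp add: autocorr_outside_Delta autocorr_fneg)
  then show ?thesis
    unfolding Qset_def mem_Collect_eq using ex by (rule conjI)
qed

lemma Qset_iff: "q \<in> Qset N1 N2 N3 \<longleftrightarrow> (\<exists>(r::nat) F. q = (\<lambda>k. \<Sum>j<r. autocorr N1 N2 N3 (F j) k))"
proof
  assume "q \<in> Qset N1 N2 N3"
  then obtain r :: nat and F where "q \<in> Vsp N1 N2 N3"
    and q: "\<And>\<theta>. trig_eval (Delta N1 N2 N3) q \<theta> = (\<Sum>j<r. of_real ((cmod (trig_eval (Sset N1 N2 N3) (F j) \<theta>))\<^sup>2))"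
    unfolding Qset_def mem_Collect_eq by blast
  have coeff: "q k = (\<Sum>j<r. autocorr N1 N2 N3 (F j) k)" for k
  proof (cases "k \<in> Delta N1 N2 N3")
    case True
    show ?thesis
    proof (rule trig_eval_Delta_coeffs_unique[OF _ True])
      fix \<theta>
      show "trig_eval (Delta N1 N2 N3) q \<theta> = trig_eval (Delta N1 N2 N3) (\<lambda>k. \<Sum>j<r. autocorr N1 N2 N3 (F j) k) \<theta>"
        unfolding q trig_eval_sum_autocorr ..
    qed
  next
    case False
    with \<open>q \<in> Vsp N1 N2 N3\<close> have "q k = 0"
      unfolding Vsp_iff by blast
    with False show ?thesis
      by (simp add: autocorr_outside_Delta)
  qed
  show "\<exists>(r::nat) F. q = (\<lambda>k. \<Sum>j<r. autocorr N1 N2 N3 (F j) k)"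
    by (intro exI[of _ r] exI[of _ F]) (simp add: fun_eq_iff coeff)
next
  assume "\<exists>(r::nat) F. q = (\<lambda>k. \<Sum>j<r. autocorr N1 N2 N3 (F j) k)"
  then obtain r :: nat and F where "q = (\<lambda>k. \<Sum>j<r. autocorr N1 N2 N3 (F j) k)"
    by blast
  then show "q \<in> Qset N1 N2 N3"
    by (simp add: sum_autocorr_in_Qset)
qed

lemma autocorr_in_Qset: "autocorr N1 N2 N3 F \<in> Qset N1 N2 N3"
  using sum_autocorr_in_Qset[where r=1 and F="\<lambda>_. F"] by simp

lemma zero_in_Qset: "(\<lambda>_. 0) \<in> Qset N1 N2 N3"
  using sum_autocorr_in_Qset[where r=0] by simp

lemma Qset_subset_Vsp: "Qset N1 N2 N3 \<subseteq> Vsp N1 N2 N3"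
  unfolding Qset_def by blast

lemma scale_in_Qset:
  assumes "f \<in> Qset N1 N2 N3" "0 \<le> a"
  shows "(\<lambda>k. complex_of_real a * f k) \<in> Qset N1 N2 N3"
proof -
  obtain r :: nat and F where f: "f = (\<lambda>k. \<Sum>j<r. autocorr N1 N2 N3 (F j) k)"
    using assms(1) unfolding Qset_iff by blast
  have scaled: "autocorr N1 N2 N3 (\<lambda>x. of_real (sqrt a) * F j x) k = of_real a * autocorr N1 N2 N3 (F j) k" for j k
    using assms(2) by (simp add: autocorr_scale flip: of_real_mult)
  have "(\<lambda>k. complex_of_real a * f k) = (\<lambda>k. \<Sum>j<r. autocorr N1 N2 N3 (\<lambda>x. of_real (sqrt a) * F j x) k)"
    unfolding f sum_distrib_left scaled ..
  then show ?thesis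
    by (simp add: sum_autocorr_in_Qset)
qed

section \<open>Hermitian positivity and the matrix A\<close>

definition herm_form :: "nat \<Rightarrow> nat \<Rightarrow> nat \<Rightarrow> (freq \<Rightarrow> complex) \<Rightarrow> (freq \<Rightarrow> complex) \<Rightarrow> complex" where
  "herm_form N1 N2 N3 \<Phi> F = (\<Sum>x\<in>Sset N1 N2 N3. \<Sum>y\<in>Sset N1 N2 N3. F x * cnj (F y) * \<Phi> (fdiff x y))"

lemma LPhi_autocorr: "LPhi N1 N2 N3 \<Phi> (autocorr N1 N2 N3 F) = herm_form N1 N2 N3 \<Phi> F"
proof -
  have "LPhi N1 N2 N3 \<Phi> (autocorr N1 N2 N3 F) = (\<Sum>k\<in>Delta N1 N2 N3. \<Sum>x\<in>Sset N1 N2 N3. \<Sum>y\<in>Sset N1 N2 N3.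
        if fdiff x y = k then F x * cnj (F y) * \<Phi> k else 0)"
    unfolding LPhi_def autocorr_def sum_distrib_right by (intro sum.cong refl) simp
  also have "\<dots> = (\<Sum>x\<in>Sset N1 N2 N3. \<Sum>k\<in>Delta N1 N2 N3. \<Sum>y\<in>Sset N1 N2 N3.
        if fdiff x y = k then F x * cnj (F y) * \<Phi> k else 0)"
    by (rule sum.swap)
  also have "\<dots> = (\<Sum>x\<in>Sset N1 N2 N3. \<Sum>y\<in>Sset N1 N2 N3. \<Sum>k\<in>Delta N1 N2 N3.
        if fdiff x y = k then F x * cnj (F y) * \<Phi> k else 0)"
    by (rule sum.cong[OF refl]) (rule sum.swap)
  also have "\<dots> = herm_form N1 N2 N3 \<Phi> F"
    unfolding herm_form_def using fdiff_in_Delta by (intro sum.cong refl) (simp add: sum.delta)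
  finally show ?thesis .
qed

lemma LPhi_sum: "LPhi N1 N2 N3 \<Phi> (\<lambda>k. \<Sum>j\<in>J. g j k) = (\<Sum>j\<in>J. LPhi N1 N2 N3 \<Phi> (g j))"
  unfolding LPhi_def sum_distrib_right by (rule sum.swap)

lemma sum_fibres_mult:
  fixes \<xi> :: "nat \<Rightarrow> 'a::comm_semiring_1"
  assumes "finite S" "\<forall>i<n. x i \<in> S"
  shows "(\<Sum>s\<in>S. (\<Sum>i<n. if x i = s then \<xi> i else 0) * g s) = (\<Sum>i<n. \<xi> i * g (x i))"
proof -
  have "(\<Sum>s\<in>S. (\<Sum>i<n. if x i = s then \<xi> i else 0) * g s) = (\<Sum>s\<in>S. \<Sum>i<n. if x i = s then \<xi> i * g s else 0)"
    unfolding sum_distrib_right by (intro sum.cong refl) simp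
  also have "\<dots> = (\<Sum>i<n. \<Sum>s\<in>S. if x i = s then \<xi> i * g s else 0)"
    by (rule sum.swap)
  also have "\<dots> = (\<Sum>i<n. \<xi> i * g (x i))"
    using assms by (intro sum.cong refl) (simp add: sum.delta)
  finally show ?thesis .
qed

text \<open>The weights of repeated points of the family are collected into one coefficient vector on \<open>S\<close>.\<close>

lemma herm_form_nonneg_imp_herm_pos:
  assumes "\<And>F. 0 \<le> herm_form N1 N2 N3 \<Phi> F"
  shows "herm_pos N1 N2 N3 \<Phi>"
  unfolding herm_pos_def
proof (intro allI impI)
  fix n :: nat and x :: "nat \<Rightarrow> freq" and \<xi> :: "nat \<Rightarrow> complex"
  assume x: "\<forall>i<n. x i \<in> Sset N1 N2 N3"
  define F where "F s = (\<Sum>i<n. if x i = s then \<xi> i else 0)" for s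
  have cnj_F: "cnj (F s) = (\<Sum>i<n. if x i = s then cnj (\<xi> i) else 0)" for s
    unfolding F_def cnj_sum by (intro sum.cong refl) simp
  have "herm_form N1 N2 N3 \<Phi> F = (\<Sum>s\<in>Sset N1 N2 N3. F s * (\<Sum>t\<in>Sset N1 N2 N3. cnj (F t) * \<Phi> (fdiff s t)))"
    unfolding herm_form_def by (simp add: sum_distrib_left mult.assoc)
  also have "\<dots> = (\<Sum>s\<in>Sset N1 N2 N3. F s * (\<Sum>j<n. cnj (\<xi> j) * \<Phi> (fdiff s (x j))))"
    unfolding cnj_F sum_fibres_mult[OF finite_Sset x] ..
  also have "\<dots> = (\<Sum>i<n. \<xi> i * (\<Sum>j<n. cnj (\<xi> j) * \<Phi> (fdiff (x i) (x j))))"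
    unfolding F_def by (rule sum_fibres_mult[OF finite_Sset x])
  also have "\<dots> = (\<Sum>i<n. \<Sum>j<n. \<xi> i * cnj (\<xi> j) * \<Phi> (fdiff (x i) (x j)))"
    by (simp add: sum_distrib_left mult.assoc)
  finally show "0 \<le> (\<Sum>i<n. \<Sum>j<n. \<xi> i * cnj (\<xi> j) * \<Phi> (fdiff (x i) (x j)))"
    using assms[of F] by simp
qed

abbreviation card_S :: "nat \<Rightarrow> nat \<Rightarrow> nat \<Rightarrow> nat" where
  "card_S N1 N2 N3 \<equiv> (N1 + 1) * (N2 + 1) * (N3 + 1)"

definition lex_index :: "nat \<Rightarrow> nat \<Rightarrow> freq \<Rightarrow> nat" where
  "lex_index N2 N3 s = (nat (fst s) * (N2 + 1) + nat (fst (snd s))) * (N3 + 1) + nat (snd (snd s))"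

lemma lex_index_sidx: "lex_index N2 N3 (sidx N2 N3 i) = i"
proof -
  have div_PQ: "i div ((N2 + 1) * (N3 + 1)) = i div (N3 + 1) div (N2 + 1)"
    by (simp only: mult.commute[of "N2 + 1"] div_mult2_eq)
  show ?thesis
    unfolding lex_index_def sidx_def fst_conv snd_conv nat_int div_PQ div_mult_mod_eq ..
qed

lemma Sset_elim:
  assumes "s \<in> Sset N1 N2 N3"
  obtains a b c where "s = (int a, int b, int c)" "a \<le> N1" "b \<le> N2" "c \<le> N3"
proof -
  obtain x y z where "s = (x, y, z)" "0 \<le> x" "x \<le> int N1" "0 \<le> y" "y \<le> int N2" "0 \<le> z" "z \<le> int N3"
    using assms unfolding Sset_def by auto
  then show ?thesis
    using that[of "nat x" "nat y" "nat z"] by auto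
qed

lemma sidx_lex_index:
  assumes "s \<in> Sset N1 N2 N3"
  shows "sidx N2 N3 (lex_index N2 N3 s) = s"
proof -
  obtain a b c where s: "s = (int a, int b, int c)" "b \<le> N2" "c \<le> N3"
    using assms by (rule Sset_elim)
  then have "b < N2 + 1" "c < N3 + 1"
    by simp_all
  have i: "lex_index N2 N3 s = c + (b + a * (N2 + 1)) * (N3 + 1)"
    unfolding lex_index_def s by simp
  have div_Q: "lex_index N2 N3 s div (N3 + 1) = b + a * (N2 + 1)"
    and mod_Q: "lex_index N2 N3 s mod (N3 + 1) = c"
    unfolding i using \<open>c < N3 + 1\<close> by (simp_all only: div_mult_self1 div_less mod_mult_self1 mod_less)
  have div_P: "(b + a * (N2 + 1)) div (N2 + 1) = a" and mod_P: "(b + a * (N2 + 1)) mod (N2 + 1) = b"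
    using \<open>b < N2 + 1\<close> by (simp_all only: div_mult_self1 div_less mod_mult_self1 mod_less)
  have div_PQ: "lex_index N2 N3 s div ((N2 + 1) * (N3 + 1)) = lex_index N2 N3 s div (N3 + 1) div (N2 + 1)"
    by (simp only: mult.commute[of "N2 + 1"] div_mult2_eq)
  show ?thesis
    unfolding sidx_def div_PQ div_Q div_P mod_P mod_Q using s(1) by simp
qed

lemma sidx_in_Sset:
  assumes "i < card_S N1 N2 N3"
  shows "sidx N2 N3 i \<in> Sset N1 N2 N3"
proof -
  have "i div ((N2 + 1) * (N3 + 1)) < N1 + 1"
    using assms by (simp only: mult.assoc less_mult_imp_div_less)
  then show ?thesis
    unfolding sidx_def Sset_def by auto
qed

lemma lex_index_less:
  assumes "s \<in> Sset N1 N2 N3"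
  shows "lex_index N2 N3 s < card_S N1 N2 N3"
proof -
  obtain a b c where s: "s = (int a, int b, int c)" "a \<le> N1" "b \<le> N2" "c \<le> N3"
    using assms by (rule Sset_elim)
  have "a * (N2 + 1) + b < (a + 1) * (N2 + 1)"
    using s by simp
  also have "\<dots> \<le> (N1 + 1) * (N2 + 1)"
    using s by (intro mult_right_mono) auto
  finally have "(a * (N2 + 1) + b + 1) * (N3 + 1) \<le> (N1 + 1) * (N2 + 1) * (N3 + 1)"
    by (intro mult_right_mono) auto
  moreover have "(a * (N2 + 1) + b) * (N3 + 1) + c < (a * (N2 + 1) + b + 1) * (N3 + 1)"
    using s by simp
  ultimately show ?thesis
    unfolding lex_index_def s by simp
qed

lemma bij_betw_sidx: "bij_betw (sidx N2 N3) {..<card_S N1 N2 N3} (Sset N1 N2 N3)"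
proof (rule bij_betw_byWitness[where f' = "lex_index N2 N3"])
  show "sidx N2 N3 ` {..<card_S N1 N2 N3} \<subseteq> Sset N1 N2 N3"
    using sidx_in_Sset by blast
  show "lex_index N2 N3 ` Sset N1 N2 N3 \<subseteq> {..<card_S N1 N2 N3}"
    using lex_index_less by blast
qed (simp_all add: lex_index_sidx sidx_lex_index)

lemma herm_form_sidx:
  "herm_form N1 N2 N3 \<Phi> F = (\<Sum>i<card_S N1 N2 N3. \<Sum>j<card_S N1 N2 N3.
      F (sidx N2 N3 i) * cnj (F (sidx N2 N3 j)) * \<Phi> (fdiff (sidx N2 N3 i) (sidx N2 N3 j)))"
  unfolding herm_form_def sum.reindex_bij_betw[OF bij_betw_sidx, symmetric] ..

lemma herm_pos_iff_herm_form_nonneg: "herm_pos N1 N2 N3 \<Phi> \<longleftrightarrow> (\<forall>F. 0 \<le> herm_form N1 N2 N3 \<Phi> F)"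
proof
  assume "herm_pos N1 N2 N3 \<Phi>"
  show "\<forall>F. 0 \<le> herm_form N1 N2 N3 \<Phi> F"
  proof
    fix F
    show "0 \<le> herm_form N1 N2 N3 \<Phi> F"
      unfolding herm_form_sidx using sidx_in_Sset \<open>herm_pos N1 N2 N3 \<Phi>\<close>
      unfolding herm_pos_def by (blast dest: spec[of _ "\<lambda>i. F (sidx N2 N3 i)"])
  qed
qed (use herm_form_nonneg_imp_herm_pos in blast)

lemma herm_pos_iff_LPhi_nonneg_on_Qset:
  "herm_pos N1 N2 N3 \<Phi> \<longleftrightarrow> (\<forall>f\<in>Qset N1 N2 N3. 0 \<le> LPhi N1 N2 N3 \<Phi> f)"
proof
  assume "herm_pos N1 N2 N3 \<Phi>"
  show "\<forall>f\<in>Qset N1 N2 N3. 0 \<le> LPhi N1 N2 N3 \<Phi> f"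
  proof
    fix f assume "f \<in> Qset N1 N2 N3"
    then obtain r :: nat and F where "f = (\<lambda>k. \<Sum>j<r. autocorr N1 N2 N3 (F j) k)"
      unfolding Qset_iff by blast
    then have "LPhi N1 N2 N3 \<Phi> f = (\<Sum>j<r. herm_form N1 N2 N3 \<Phi> (F j))"
      by (simp add: LPhi_sum LPhi_autocorr)
    also have "0 \<le> \<dots>"
      using \<open>herm_pos N1 N2 N3 \<Phi>\<close> by (simp add: herm_pos_iff_herm_form_nonneg sum_nonneg)
    finally show "0 \<le> LPhi N1 N2 N3 \<Phi> f" .
  qed
next
  assume "\<forall>f\<in>Qset N1 N2 N3. 0 \<le> LPhi N1 N2 N3 \<Phi> f"
  then show "herm_pos N1 N2 N3 \<Phi>"
    unfolding herm_pos_iff_herm_form_nonneg using autocorr_in_Qset by (metis LPhi_autocorr)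
qed

lemma herm_pos_two_points:
  assumes "herm_pos N1 N2 N3 \<Phi>" "s \<in> Sset N1 N2 N3" "t \<in> Sset N1 N2 N3"
  shows "0 \<le> \<Phi> (fdiff s s) + cnj c * \<Phi> (fdiff s t) + c * \<Phi> (fdiff t s) + c * cnj c * \<Phi> (fdiff t t)"
proof -
  let ?x = "\<lambda>i::nat. if i = 0 then s else t" and ?\<xi> = "\<lambda>i::nat. if i = 0 then 1 else c"
  have "0 \<le> (\<Sum>i<2. \<Sum>j<2. ?\<xi> i * cnj (?\<xi> j) * \<Phi> (fdiff (?x i) (?x j)))"
    using assms(1)[unfolded herm_pos_def, rule_format, of 2 ?x ?\<xi>] assms(2,3) by simp
  then show ?thesis
    by (simp add: numeral_2_eq_2 add.assoc)
qed

lemma herm_pos_hermitian: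
  assumes "herm_pos N1 N2 N3 \<Phi>" "k \<in> Delta N1 N2 N3"
  shows "\<Phi> (fneg k) = cnj (\<Phi> k)"
proof -
  obtain a b c where k: "k = (a, b, c)"
    by (cases k) auto
  define s where "s = (max a 0, max b 0, max c 0)"
  define t where "t = (max (- a) 0, max (- b) 0, max (- c) 0)"
  have "s \<in> Sset N1 N2 N3" "t \<in> Sset N1 N2 N3"
    using assms(2) unfolding k s_def t_def Sset_def Delta_def by auto
  note two = herm_pos_two_points[OF assms(1) this]
  have "fdiff s t = k" "fdiff t s = fneg k" "fdiff s s = (0, 0, 0)" "fdiff t t = (0, 0, 0)"
    unfolding s_def t_def k fdiff_def fneg_def by auto
  with two[of 0] two[of 1] two[of \<i>] show ?thesis
    by (auto simp: less_eq_complex_def complex_eq_iff)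
qed

lemma linear_term_eq_0_if_quadratic_nonneg:
  fixes x g :: real
  assumes "\<And>s. 0 \<le> s * x + s\<^sup>2 * g"
  shows "x = 0"
proof -
  have "0 \<le> g"
    using assms[of 1] assms[of "-1"] by simp
  define d where "d = g + 1"
  have "0 < d" and g: "g = d - 1"
    using \<open>0 \<le> g\<close> unfolding d_def by simp_all
  have "(- x / d) * x + (- x / d)\<^sup>2 * g = - x\<^sup>2 / d\<^sup>2"
    unfolding g using \<open>0 < d\<close> by (simp add: field_simps power2_eq_square)
  then have "x\<^sup>2 / d\<^sup>2 \<le> 0"
    using assms[of "- x / d"] by simp
  then show ?thesis
    using \<open>0 < d\<close> by (simp add: divide_le_0_iff)
qed

lemma complex_linear_term_eq_0_if_quadratic_nonneg:
  fixes z g :: complex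
  assumes "\<And>s::real. 0 \<le> complex_of_real s * z + complex_of_real (s\<^sup>2) * g"
  shows "z = 0"
proof -
  have "Im z = 0"
    using assms[of 1] assms[of "-1"] by (simp add: less_eq_complex_def)
  moreover have "Re z = 0"
    using assms by (intro linear_term_eq_0_if_quadratic_nonneg[of "Re z" "Re g"]) (simp add: less_eq_complex_def)
  ultimately show ?thesis
    by (simp add: complex_eq_iff)
qed

text \<open>Perturbing \<open>w\<close> by \<open>t e\<^sub>i\<^sub>0\<close> gives \<open>0 \<le> cnj t \<alpha> + t \<beta> + |t|\<^sup>2 c i0 i0\<close> for all \<open>t\<close>; taking \<open>t\<close> real and
  purely imaginary forces \<open>\<alpha> + \<beta> = 0\<close> and \<open>\<beta> - \<alpha> = 0\<close>.\<close>

lemma psd_isotropic_imp_kernel: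
  fixes c :: "nat \<Rightarrow> nat \<Rightarrow> complex"
  assumes psd: "\<And>\<xi>. 0 \<le> (\<Sum>i<n. \<Sum>j<n. \<xi> i * cnj (\<xi> j) * c i j)"
    and isotropic: "(\<Sum>i<n. \<Sum>j<n. w i * cnj (w j) * c i j) = 0" and "i0 < n"
  shows "(\<Sum>i<n. w i * c i i0) = 0"
proof -
  define \<alpha> where "\<alpha> = (\<Sum>i<n. w i * c i i0)"
  define \<beta> where "\<beta> = (\<Sum>j<n. cnj (w j) * c i0 j)"
  have if_sum: "(\<Sum>j<n. if P then f j else 0) = (if P then sum f {..<n} else 0)" for P and f :: "nat \<Rightarrow> complex"
    by simp
  have "(\<Sum>i<n. \<Sum>j<n. (w i + (if i = i0 then t else 0)) * cnj (w j + (if j = i0 then t else 0)) * c i j)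
      = (\<Sum>i<n. \<Sum>j<n. w i * cnj (w j) * c i j) + cnj t * \<alpha> + t * \<beta> + t * cnj t * c i0 i0" for t
    unfolding \<alpha>_def \<beta>_def using \<open>i0 < n\<close>
    by (simp add: algebra_simps sum.distrib sum_distrib_left if_sum if_distrib[of cnj] sum.delta'
        if_distrib[of "\<lambda>x. x * _"] if_distrib[of "\<lambda>x. _ * x"] cong: if_cong)
  then have perturbed: "0 \<le> cnj t * \<alpha> + t * \<beta> + t * cnj t * c i0 i0" for t
    using psd[of "\<lambda>i. w i + (if i = i0 then t else 0)"] isotropic by simp
  have "\<alpha> + \<beta> = 0"
  proof (rule complex_linear_term_eq_0_if_quadratic_nonneg)
    fix s :: real
    show "0 \<le> complex_of_real s * (\<alpha> + \<beta>) + complex_of_real (s\<^sup>2) * c i0 i0"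
      using perturbed[of "complex_of_real s"] by (simp add: algebra_simps power2_eq_square)
  qed
  moreover have "\<i> * (\<beta> - \<alpha>) = 0"
  proof (rule complex_linear_term_eq_0_if_quadratic_nonneg)
    fix s :: real
    have "cnj (\<i> * of_real s) * \<alpha> + \<i> * of_real s * \<beta> + \<i> * of_real s * cnj (\<i> * of_real s) * c i0 i0
        = complex_of_real s * (\<i> * (\<beta> - \<alpha>)) + complex_of_real (s\<^sup>2) * c i0 i0"
      by (simp add: algebra_simps power2_eq_square)
    then show "0 \<le> complex_of_real s * (\<i> * (\<beta> - \<alpha>)) + complex_of_real (s\<^sup>2) * c i0 i0"
      using perturbed[of "\<i> * of_real s"] by simp
  qed
  ultimately show ?thesis
    unfolding \<alpha>_def by (simp add: algebra_simps)
qed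

lemma det_mat_eq_0_iff:
  fixes f :: "nat \<times> nat \<Rightarrow> 'a::field"
  shows "det (mat n n f) = 0 \<longleftrightarrow> (\<exists>w. (\<exists>i<n. w i \<noteq> 0) \<and> (\<forall>i<n. (\<Sum>j<n. f (i, j) * w j) = 0))"
proof -
  have "det (mat n n f) = 0 \<longleftrightarrow> (\<exists>v. v \<in> carrier_vec n \<and> v \<noteq> 0\<^sub>v n \<and> mat n n f *\<^sub>v v = 0\<^sub>v n)"
    by (rule det_0_iff_vec_prod_zero_field) simp
  also have "\<dots> \<longleftrightarrow> (\<exists>w. vec n w \<noteq> 0\<^sub>v n \<and> mat n n f *\<^sub>v vec n w = 0\<^sub>v n)"
    by (metis carrier_vecD eq_vecI index_vec vec_carrier)
  also have "\<dots> \<longleftrightarrow> (\<exists>w. (\<exists>i<n. w i \<noteq> 0) \<and> (\<forall>i<n. (\<Sum>j<n. f (i, j) * w j) = 0))"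
    by (simp add: vec_eq_iff scalar_prod_def atLeast0LessThan)
  finally show ?thesis .
qed

lemma det_Amat_eq_0_iff:
  "det (Amat N1 N2 N3 \<Phi>) = 0 \<longleftrightarrow> (\<exists>w. (\<exists>i<card_S N1 N2 N3. w i \<noteq> 0) \<and>
      (\<forall>i<card_S N1 N2 N3. (\<Sum>j<card_S N1 N2 N3. \<Phi> (fdiff (sidx N2 N3 j) (sidx N2 N3 i)) * w j) = 0))"
  unfolding Amat_def det_mat_eq_0_iff by simp

lemma det_Amat_eq_0_iff_isotropic:
  assumes "herm_pos N1 N2 N3 \<Phi>"
  shows "det (Amat N1 N2 N3 \<Phi>) = 0 \<longleftrightarrow> (\<exists>F. (\<exists>s\<in>Sset N1 N2 N3. F s \<noteq> 0) \<and> herm_form N1 N2 N3 \<Phi> F = 0)"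
proof
  assume "det (Amat N1 N2 N3 \<Phi>) = 0"
  then obtain w i1 where i1: "i1 < card_S N1 N2 N3" "w i1 \<noteq> 0"
    and kernel: "\<forall>i<card_S N1 N2 N3. (\<Sum>j<card_S N1 N2 N3. \<Phi> (fdiff (sidx N2 N3 j) (sidx N2 N3 i)) * w j) = 0"
    unfolding det_Amat_eq_0_iff by blast
  define F where "F s = w (lex_index N2 N3 s)" for s
  have F_sidx: "F (sidx N2 N3 i) = w i" for i
    unfolding F_def lex_index_sidx ..
  have "herm_form N1 N2 N3 \<Phi> F = (\<Sum>i<card_S N1 N2 N3. cnj (w i) *
      (\<Sum>j<card_S N1 N2 N3. \<Phi> (fdiff (sidx N2 N3 j) (sidx N2 N3 i)) * w j))"
    unfolding herm_form_sidx F_sidx sum_distrib_left by (subst sum.swap) (simp add: mult_ac)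
  also have "\<dots> = 0"
    using kernel by simp
  finally have "herm_form N1 N2 N3 \<Phi> F = 0" .
  moreover have "sidx N2 N3 i1 \<in> Sset N1 N2 N3" "F (sidx N2 N3 i1) \<noteq> 0"
    using i1 sidx_in_Sset F_sidx by auto
  ultimately show "\<exists>F. (\<exists>s\<in>Sset N1 N2 N3. F s \<noteq> 0) \<and> herm_form N1 N2 N3 \<Phi> F = 0"
    by blast
next
  assume "\<exists>F. (\<exists>s\<in>Sset N1 N2 N3. F s \<noteq> 0) \<and> herm_form N1 N2 N3 \<Phi> F = 0"
  then obtain F s where s: "s \<in> Sset N1 N2 N3" "F s \<noteq> 0" and isotropic: "herm_form N1 N2 N3 \<Phi> F = 0"
    by blast
  define w where "w i = F (sidx N2 N3 i)" for i
  have psd: "0 \<le> (\<Sum>i<card_S N1 N2 N3. \<Sum>j<card_S N1 N2 N3. \<xi> i * cnj (\<xi> j) * \<Phi> (fdiff (sidx N2 N3 i) (sidx N2 N3 j)))" for \<xi>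
    using assms[unfolded herm_pos_def, rule_format, of "card_S N1 N2 N3" "sidx N2 N3" \<xi>] sidx_in_Sset by blast
  have "(\<Sum>j<card_S N1 N2 N3. \<Phi> (fdiff (sidx N2 N3 j) (sidx N2 N3 i)) * w j) = 0" if "i < card_S N1 N2 N3" for i
    using psd_isotropic_imp_kernel[where c = "\<lambda>i j. \<Phi> (fdiff (sidx N2 N3 i) (sidx N2 N3 j))", OF psd
        isotropic[unfolded herm_form_sidx, folded w_def] that]
    by (simp add: mult.commute)
  moreover have "lex_index N2 N3 s < card_S N1 N2 N3" "w (lex_index N2 N3 s) \<noteq> 0"
    using lex_index_less[OF s(1)] s by (simp_all add: w_def sidx_lex_index)
  ultimately show "det (Amat N1 N2 N3 \<Phi>) = 0"
    unfolding det_Amat_eq_0_iff by blast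
qed

lemma nonzero_Qset_LPhi_eq_0_iff_det_Amat_eq_0:
  assumes "herm_pos N1 N2 N3 \<Phi>"
  shows "(\<exists>f\<in>Qset N1 N2 N3. f \<noteq> (\<lambda>_. 0) \<and> LPhi N1 N2 N3 \<Phi> f = 0) \<longleftrightarrow> det (Amat N1 N2 N3 \<Phi>) = 0"
proof
  assume "\<exists>f\<in>Qset N1 N2 N3. f \<noteq> (\<lambda>_. 0) \<and> LPhi N1 N2 N3 \<Phi> f = 0"
  then obtain f where "f \<in> Qset N1 N2 N3" "f \<noteq> (\<lambda>_. 0)" "LPhi N1 N2 N3 \<Phi> f = 0"
    by blast
  then obtain r :: nat and F where f: "f = (\<lambda>k. \<Sum>j<r. autocorr N1 N2 N3 (F j) k)"
    unfolding Qset_iff by blast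
  have "\<exists>j<r. autocorr N1 N2 N3 (F j) \<noteq> (\<lambda>_. 0)"
    using \<open>f \<noteq> (\<lambda>_. 0)\<close> unfolding f by (auto intro: sum.neutral)
  then obtain j s where "j < r" "s \<in> Sset N1 N2 N3" "F j s \<noteq> 0"
    unfolding autocorr_eq_0_iff by blast
  have sum_eq_0: "(\<Sum>j<r. herm_form N1 N2 N3 \<Phi> (F j)) = 0"
    using \<open>LPhi N1 N2 N3 \<Phi> f = 0\<close> unfolding f LPhi_sum LPhi_autocorr .
  have "0 \<le> herm_form N1 N2 N3 \<Phi> (F i)" for i
    using assms herm_pos_iff_herm_form_nonneg by blast
  then have "herm_form N1 N2 N3 \<Phi> (F j) = 0"
    by (rule sum_nonneg_0[OF finite_lessThan _ sum_eq_0]) (simp add: \<open>j < r\<close>)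
  with \<open>s \<in> Sset N1 N2 N3\<close> \<open>F j s \<noteq> 0\<close> show "det (Amat N1 N2 N3 \<Phi>) = 0"
    unfolding det_Amat_eq_0_iff_isotropic[OF assms] by blast
next
  assume "det (Amat N1 N2 N3 \<Phi>) = 0"
  then obtain F where "\<exists>s\<in>Sset N1 N2 N3. F s \<noteq> 0" "herm_form N1 N2 N3 \<Phi> F = 0"
    unfolding det_Amat_eq_0_iff_isotropic[OF assms] by blast
  then show "\<exists>f\<in>Qset N1 N2 N3. f \<noteq> (\<lambda>_. 0) \<and> LPhi N1 N2 N3 \<Phi> f = 0"
    by (intro bexI[of _ "autocorr N1 N2 N3 F"]) (auto simp: autocorr_eq_0_iff LPhi_autocorr autocorr_in_Qset)
qed

section \<open>Real-linear functionals\<close>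

lemma real_lin_functional_scale:
  assumes "real_lin_functional V L" "f \<in> V"
  shows "L (\<lambda>k. complex_of_real a * f k) = a * L f"
proof -
  have "L (\<lambda>k. complex_of_real a * f k + complex_of_real 0 * f k) = a * L f + 0 * L f"
    using assms unfolding real_lin_functional_def by blast
  then show ?thesis
    by simp
qed

lemma real_lin_functional_uminus:
  assumes "real_lin_functional V L"
  shows "real_lin_functional V (\<lambda>f. - L f)"
  using assms unfolding real_lin_functional_def by (auto simp: algebra_simps)

lemma real_lin_functional_sum:
  assumes lin: "real_lin_functional V L" and "(\<lambda>_. 0) \<in> V"
    and closed: "\<forall>p\<in>V. \<forall>q\<in>V. \<forall>a b :: real. (\<lambda>k. complex_of_real a * p k + complex_of_real b * q k) \<in> V"
    and "finite K" "\<And>i. i \<in> K \<Longrightarrow> g i \<in> V"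
  shows "(\<lambda>k. \<Sum>i\<in>K. complex_of_real (a i) * g i k) \<in> V
    \<and> L (\<lambda>k. \<Sum>i\<in>K. complex_of_real (a i) * g i k) = (\<Sum>i\<in>K. a i * L (g i))"
  using \<open>finite K\<close> \<open>\<And>i. i \<in> K \<Longrightarrow> g i \<in> V\<close>
proof (induction K rule: finite_induct)
  case empty
  then show ?case
    using real_lin_functional_scale[OF lin \<open>(\<lambda>_. 0) \<in> V\<close>, of 0] \<open>(\<lambda>_. 0) \<in> V\<close> by simp
next
  case (insert i K)
  define s where "s k = (\<Sum>i\<in>K. complex_of_real (a i) * g i k)" for k
  have "s \<in> V" "L s = (\<Sum>i\<in>K. a i * L (g i))" "g i \<in> V"
    using insert unfolding s_def by auto
  then have "(\<lambda>k. complex_of_real (a i) * g i k + complex_of_real 1 * s k) \<in> V"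
    and "L (\<lambda>k. complex_of_real (a i) * g i k + complex_of_real 1 * s k) = a i * L (g i) + 1 * L s"
    using closed lin unfolding real_lin_functional_def by blast+
  moreover have "(\<lambda>k. \<Sum>i\<in>insert i K. complex_of_real (a i) * g i k)
      = (\<lambda>k. complex_of_real (a i) * g i k + complex_of_real 1 * s k)"
    using insert unfolding s_def by simp
  ultimately show ?case
    using insert \<open>L s = _\<close> by simp
qed

text \<open>\<open>cos_mode k\<close> and \<open>sin_mode k\<close> are the coefficient vectors of \<open>cos (k \<cdot> \<theta>)\<close> and \<open>sin (k \<cdot> \<theta>)\<close>.\<close>

definition cos_mode :: "freq \<Rightarrow> freq \<Rightarrow> complex" where
  "cos_mode k j = (if j = k then 1 / 2 else 0) + (if j = fneg k then 1 / 2 else 0)"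

definition sin_mode :: "freq \<Rightarrow> freq \<Rightarrow> complex" where
  "sin_mode k j = (if j = fneg k then \<i> / 2 else 0) - (if j = k then \<i> / 2 else 0)"

lemma cos_mode_in_Vsp: "k \<in> Delta N1 N2 N3 \<Longrightarrow> cos_mode k \<in> Vsp N1 N2 N3"
  unfolding Vsp_iff cos_mode_def by (auto simp: fneg_eq_iff)

lemma sin_mode_in_Vsp: "k \<in> Delta N1 N2 N3 \<Longrightarrow> sin_mode k \<in> Vsp N1 N2 N3"
  unfolding Vsp_iff sin_mode_def by (auto simp: fneg_eq_iff)

lemma cos_mode_fneg: "cos_mode (fneg k) = cos_mode k"
  unfolding cos_mode_def by (auto simp: fneg_eq_iff)

lemma sin_mode_fneg: "sin_mode (fneg k) = (\<lambda>j. complex_of_real (- 1) * sin_mode k j)"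
  unfolding sin_mode_def by (auto simp: fneg_eq_iff)

lemma Vsp_eq_sum_modes:
  assumes "q \<in> Vsp N1 N2 N3"
  shows "q = (\<lambda>j. (\<Sum>k\<in>Delta N1 N2 N3. complex_of_real (Re (q k)) * cos_mode k j)
                  - (\<Sum>k\<in>Delta N1 N2 N3. complex_of_real (Im (q k)) * sin_mode k j))"
proof
  fix j
  have outside: "\<And>k. k \<notin> Delta N1 N2 N3 \<Longrightarrow> q k = 0" and sym: "\<And>k. q (fneg k) = cnj (q k)"
    using assms unfolding Vsp_iff by auto
  have "complex_of_real (Re (q k)) * cos_mode k j - complex_of_real (Im (q k)) * sin_mode k j
      = (if k = j then q k / 2 else 0) + (if k = fneg j then cnj (q k) / 2 else 0)" for k
    unfolding cos_mode_def sin_mode_def fneg_eq_iff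
    by (cases "k = j"; cases "k = fneg j") (auto simp: complex_eq_iff field_simps)
  then have "(\<Sum>k\<in>Delta N1 N2 N3. complex_of_real (Re (q k)) * cos_mode k j)
      - (\<Sum>k\<in>Delta N1 N2 N3. complex_of_real (Im (q k)) * sin_mode k j)
      = (\<Sum>k\<in>Delta N1 N2 N3. (if k = j then q k / 2 else 0) + (if k = fneg j then cnj (q k) / 2 else 0))"
    by (simp add: sum_subtractf[symmetric])
  also have "\<dots> = q j"
    using outside[of j] sym[of j] by (simp add: sum.distrib sum.delta')
  finally show "q j = (\<Sum>k\<in>Delta N1 N2 N3. complex_of_real (Re (q k)) * cos_mode k j)
      - (\<Sum>k\<in>Delta N1 N2 N3. complex_of_real (Im (q k)) * sin_mode k j)"
    by simp
qed

lemma LPhi_in_Reals: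
  assumes "\<And>k. k \<in> Delta N1 N2 N3 \<Longrightarrow> \<Phi> (fneg k) = cnj (\<Phi> k)" "q \<in> Vsp N1 N2 N3"
  shows "LPhi N1 N2 N3 \<Phi> q \<in> \<real>"
proof -
  have "q (fneg k) = cnj (q k)" for k
    using assms(2) unfolding Vsp_iff by blast
  then have "cnj (LPhi N1 N2 N3 \<Phi> q) = (\<Sum>k\<in>Delta N1 N2 N3. q (fneg k) * \<Phi> (fneg k))"
    unfolding LPhi_def cnj_sum using assms(1) by (intro sum.cong refl) simp
  also have "\<dots> = LPhi N1 N2 N3 \<Phi> q"
    unfolding LPhi_def by (rule sum_Delta_reindex_fneg)
  finally show ?thesis
    unfolding Reals_cnj_iff .
qed

lemma real_lin_functional_eq_LPhi:
  assumes lin: "real_lin_functional (Vsp N1 N2 N3) L"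
  obtains \<Phi> where "\<And>k. \<Phi> (fneg k) = cnj (\<Phi> k)"
    and "\<And>q. q \<in> Vsp N1 N2 N3 \<Longrightarrow> complex_of_real (L q) = LPhi N1 N2 N3 \<Phi> q"
proof
  define \<Phi> where "\<Phi> k = (if k \<in> Delta N1 N2 N3 then of_real (L (cos_mode k)) + \<i> * of_real (L (sin_mode k)) else 0)" for k
  show herm: "\<Phi> (fneg k) = cnj (\<Phi> k)" for k
    using real_lin_functional_scale[OF lin sin_mode_in_Vsp, of k "- 1"]
    unfolding \<Phi>_def by (simp add: cos_mode_fneg sin_mode_fneg)
  fix q assume q: "q \<in> Vsp N1 N2 N3"
  note sum_modes = real_lin_functional_sum[OF lin zero_in_Vsp real_combination_in_Vsp finite_Delta]
  define C where "C j = (\<Sum>k\<in>Delta N1 N2 N3. complex_of_real (Re (q k)) * cos_mode k j)" for j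
  define S where "S j = (\<Sum>k\<in>Delta N1 N2 N3. complex_of_real (Im (q k)) * sin_mode k j)" for j
  have C: "C \<in> Vsp N1 N2 N3" "L C = (\<Sum>k\<in>Delta N1 N2 N3. Re (q k) * L (cos_mode k))"
    using sum_modes[where g = cos_mode and a = "\<lambda>k. Re (q k)", OF cos_mode_in_Vsp]
    unfolding C_def by blast+
  have S: "S \<in> Vsp N1 N2 N3" "L S = (\<Sum>k\<in>Delta N1 N2 N3. Im (q k) * L (sin_mode k))"
    using sum_modes[where g = sin_mode and a = "\<lambda>k. Im (q k)", OF sin_mode_in_Vsp]
    unfolding S_def by blast+
  have "q = (\<lambda>j. complex_of_real 1 * C j + complex_of_real (- 1) * S j)"
    using Vsp_eq_sum_modes[OF q] unfolding C_def S_def by simp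
  moreover have "L (\<lambda>j. complex_of_real 1 * C j + complex_of_real (- 1) * S j) = 1 * L C + (- 1) * L S"
    using lin C(1) S(1) unfolding real_lin_functional_def by blast
  ultimately have "L q = (\<Sum>k\<in>Delta N1 N2 N3. Re (q k) * L (cos_mode k)) - (\<Sum>k\<in>Delta N1 N2 N3. Im (q k) * L (sin_mode k))"
    using C(2) S(2) by simp
  also have "\<dots> = Re (LPhi N1 N2 N3 \<Phi> q)"
    unfolding LPhi_def Re_sum \<Phi>_def sum_subtractf[symmetric] by (intro sum.cong refl) simp
  finally have "L q = Re (LPhi N1 N2 N3 \<Phi> q)" .
  moreover have "LPhi N1 N2 N3 \<Phi> q \<in> \<real>"
    by (rule LPhi_in_Reals[OF _ q]) (rule herm)
  ultimately show "complex_of_real (L q) = LPhi N1 N2 N3 \<Phi> q"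
    by (simp add: complex_is_Real_iff complex_eq_iff)
qed

section \<open>Supporting hyperplanes\<close>

lemma nonneg_supporting_functional_eq_LPhi:
  assumes lin: "real_lin_functional (Vsp N1 N2 N3) L" and nonneg: "\<forall>f\<in>Qset N1 N2 N3. 0 \<le> L f"
    and f0: "f0 \<in> Qset N1 N2 N3" "f0 \<noteq> (\<lambda>_. 0)" "L f0 = 0"
  shows "\<exists>\<Phi>. herm_pos N1 N2 N3 \<Phi> \<and> (\<exists>k\<in>Delta N1 N2 N3. \<Phi> k \<noteq> 0) \<and> det (Amat N1 N2 N3 \<Phi>) = 0
    \<and> {f \<in> Vsp N1 N2 N3. L f = 0} = {f \<in> Vsp N1 N2 N3. LPhi N1 N2 N3 \<Phi> f = 0}"
proof -
  obtain \<Phi> where repr: "\<And>q. q \<in> Vsp N1 N2 N3 \<Longrightarrow> complex_of_real (L q) = LPhi N1 N2 N3 \<Phi> q"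
    using real_lin_functional_eq_LPhi[OF lin] by blast
  have "0 \<le> LPhi N1 N2 N3 \<Phi> f" if "f \<in> Qset N1 N2 N3" for f
  proof -
    have "LPhi N1 N2 N3 \<Phi> f = complex_of_real (L f)"
      using repr[OF subsetD[OF Qset_subset_Vsp that]] by simp
    then show ?thesis
      using that nonneg by (simp add: less_eq_complex_def)
  qed
  then have "herm_pos N1 N2 N3 \<Phi>"
    unfolding herm_pos_iff_LPhi_nonneg_on_Qset by blast
  moreover have "\<exists>k\<in>Delta N1 N2 N3. \<Phi> k \<noteq> 0"
  proof (rule ccontr)
    assume "\<not> (\<exists>k\<in>Delta N1 N2 N3. \<Phi> k \<noteq> 0)"
    then have "L q = 0" if "q \<in> Vsp N1 N2 N3" for q
      using repr[OF that] unfolding LPhi_def by simp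
    with lin show False
      unfolding real_lin_functional_def by blast
  qed
  moreover have "det (Amat N1 N2 N3 \<Phi>) = 0"
  proof -
    have "LPhi N1 N2 N3 \<Phi> f0 = 0"
      using repr[OF subsetD[OF Qset_subset_Vsp f0(1)]] f0(3) by simp
    with f0 show ?thesis
      unfolding nonzero_Qset_LPhi_eq_0_iff_det_Amat_eq_0[OF \<open>herm_pos N1 N2 N3 \<Phi>\<close>, symmetric] by blast
  qed
  moreover have "{f \<in> Vsp N1 N2 N3. L f = 0} = {f \<in> Vsp N1 N2 N3. LPhi N1 N2 N3 \<Phi> f = 0}"
    using repr by (metis (mono_tags, lifting) of_real_eq_0_iff)
  ultimately show ?thesis
    by blast
qed

lemma LPhi_kernel_is_supporting_hyperplane:
  assumes "herm_pos N1 N2 N3 \<Phi>" "\<exists>k\<in>Delta N1 N2 N3. \<Phi> k \<noteq> 0" "det (Amat N1 N2 N3 \<Phi>) = 0"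
  shows "\<exists>L c. real_lin_functional (Vsp N1 N2 N3) L \<and> supports (Qset N1 N2 N3) L c
    \<and> (\<exists>f0\<in>Qset N1 N2 N3. f0 \<noteq> (\<lambda>_. 0) \<and> L f0 = c)
    \<and> {f \<in> Vsp N1 N2 N3. LPhi N1 N2 N3 \<Phi> f = 0} = {f \<in> Vsp N1 N2 N3. L f = c}"
proof -
  define L where "L f = Re (LPhi N1 N2 N3 \<Phi> f)" for f
  have herm: "\<And>k. k \<in> Delta N1 N2 N3 \<Longrightarrow> \<Phi> (fneg k) = cnj (\<Phi> k)"
    using herm_pos_hermitian[OF assms(1)] .
  define q0 where "q0 k = (if k \<in> Delta N1 N2 N3 then cnj (\<Phi> k) else 0)" for k
  have "q0 \<in> Vsp N1 N2 N3"
    unfolding Vsp_iff q0_def using herm by auto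
  moreover have "L q0 = (\<Sum>k\<in>Delta N1 N2 N3. (cmod (\<Phi> k))\<^sup>2)"
    unfolding L_def LPhi_def q0_def Re_sum
    by (intro sum.cong refl) (simp add: cmod_power2, simp add: power2_eq_square)
  moreover have "(\<Sum>k\<in>Delta N1 N2 N3. (cmod (\<Phi> k))\<^sup>2) \<noteq> 0"
    using assms(2) by (simp add: sum_nonneg_eq_0_iff)
  moreover have "L (\<lambda>k. complex_of_real a * p k + complex_of_real b * q k) = a * L p + b * L q" for a b p q
    unfolding L_def LPhi_def by (simp add: sum.distrib sum_distrib_left algebra_simps Re_sum)
  ultimately have "real_lin_functional (Vsp N1 N2 N3) L"
    unfolding real_lin_functional_def by (auto intro!: bexI[of _ q0])
  moreover have "\<forall>f\<in>Qset N1 N2 N3. 0 \<le> L f"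
    using assms(1) unfolding herm_pos_iff_LPhi_nonneg_on_Qset L_def by (auto simp: less_eq_complex_def)
  moreover have "\<exists>f0\<in>Qset N1 N2 N3. f0 \<noteq> (\<lambda>_. 0) \<and> L f0 = 0"
    using assms(1,3) unfolding L_def by (auto simp flip: nonzero_Qset_LPhi_eq_0_iff_det_Amat_eq_0)
  moreover have "LPhi N1 N2 N3 \<Phi> f \<in> \<real>" if "f \<in> Vsp N1 N2 N3" for f
    by (rule LPhi_in_Reals[OF _ that]) (rule herm)
  then have "{f \<in> Vsp N1 N2 N3. LPhi N1 N2 N3 \<Phi> f = 0} = {f \<in> Vsp N1 N2 N3. L f = 0}"
    unfolding L_def by (auto simp: complex_is_Real_iff complex_eq_iff)
  ultimately show ?thesis
    unfolding supports_def by blast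
qed

lemma supports_level_eq_0_if_cone:
  assumes "supports U L c" "(\<lambda>_. 0) \<in> U" "L (\<lambda>_. 0) = 0"
    and double: "\<And>f. f \<in> U \<Longrightarrow> (\<lambda>k. 2 * f k) \<in> U \<and> L (\<lambda>k. 2 * f k) = 2 * L f"
  shows "c = 0"
proof -
  obtain f0 where "f0 \<in> U" "L f0 = c"
    using assms(1) unfolding supports_def by blast
  with double have "(\<lambda>k. 2 * f0 k) \<in> U" "L (\<lambda>k. 2 * f0 k) = 2 * c"
    by auto
  have "(\<forall>f\<in>U. c \<le> L f) \<or> (\<forall>f\<in>U. L f \<le> c)"
    using assms(1) unfolding supports_def by blast
  then consider "c \<le> L (\<lambda>_. 0)" "c \<le> L (\<lambda>k. 2 * f0 k)" | "L (\<lambda>_. 0) \<le> c" "L (\<lambda>k. 2 * f0 k) \<le> c"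
    using assms(2) \<open>(\<lambda>k. 2 * f0 k) \<in> U\<close> by blast
  then show ?thesis
    using assms(3) \<open>L (\<lambda>k. 2 * f0 k) = 2 * c\<close> by cases linarith+
qed

lemma supports_Qset_level_eq_0:
  assumes lin: "real_lin_functional (Vsp N1 N2 N3) L" and "supports (Qset N1 N2 N3) L c"
  shows "c = 0"
proof (rule supports_level_eq_0_if_cone[OF \<open>supports _ L c\<close> zero_in_Qset])
  show "L (\<lambda>_. 0) = 0"
    using real_lin_functional_scale[OF lin zero_in_Vsp, of 0] by simp
  fix f assume f: "f \<in> Qset N1 N2 N3"
  show "(\<lambda>k. 2 * f k) \<in> Qset N1 N2 N3 \<and> L (\<lambda>k. 2 * f k) = 2 * L f"
    using scale_in_Qset[OF f, of 2] real_lin_functional_scale[OF lin subsetD[OF Qset_subset_Vsp f], of 2]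
    by simp
qed

lemma supporting_hyperplane_is_LPhi_kernel:
  assumes lin: "real_lin_functional (Vsp N1 N2 N3) L" and sup: "supports (Qset N1 N2 N3) L c"
    and f0: "f0 \<in> Qset N1 N2 N3" "f0 \<noteq> (\<lambda>_. 0)" "L f0 = c"
  shows "\<exists>\<Phi>. herm_pos N1 N2 N3 \<Phi> \<and> (\<exists>k\<in>Delta N1 N2 N3. \<Phi> k \<noteq> 0) \<and> det (Amat N1 N2 N3 \<Phi>) = 0
    \<and> {f \<in> Vsp N1 N2 N3. L f = c} = {f \<in> Vsp N1 N2 N3. LPhi N1 N2 N3 \<Phi> f = 0}"
proof -
  have "c = 0"
    using supports_Qset_level_eq_0[OF lin sup] .
  obtain L' where L': "real_lin_functional (Vsp N1 N2 N3) L'" "\<forall>f\<in>Qset N1 N2 N3. 0 \<le> L' f" "L' f0 = 0"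
    "{f \<in> Vsp N1 N2 N3. L' f = 0} = {f \<in> Vsp N1 N2 N3. L f = c}"
  proof (cases "\<forall>f\<in>Qset N1 N2 N3. c \<le> L f")
    case True
    then show ?thesis
      using that[of L] lin f0(3) \<open>c = 0\<close> by simp
  next
    case False
    then have "\<forall>f\<in>Qset N1 N2 N3. L f \<le> c"
      using sup unfolding supports_def by blast
    then show ?thesis
      using that[of "\<lambda>f. - L f"] real_lin_functional_uminus[OF lin] f0(3) \<open>c = 0\<close> by simp
  qed
  show ?thesis
    using nonneg_supporting_functional_eq_LPhi[OF L'(1,2) f0(1,2) L'(3)] by (simp only: L'(4))
qed

theorem corollary1:
  fixes N1 N2 N3 :: nat
  shows "{H. \<exists>L c. real_lin_functional (Vsp N1 N2 N3) L \<and> supports (Qset N1 N2 N3) L c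
              \<and> (\<exists>f0\<in>Qset N1 N2 N3. f0 \<noteq> (\<lambda>_. 0) \<and> L f0 = c)
              \<and> H = {f \<in> Vsp N1 N2 N3. L f = c}}
       = {H. \<exists>\<Phi>. herm_pos N1 N2 N3 \<Phi> \<and> (\<exists>k\<in>Delta N1 N2 N3. \<Phi> k \<noteq> 0)
              \<and> det (Amat N1 N2 N3 \<Phi>) = 0
              \<and> H = {f \<in> Vsp N1 N2 N3. LPhi N1 N2 N3 \<Phi> f = 0}}"
  by (intro equalityI subsetI CollectI; elim CollectE exE conjE bexE)
     (blast dest: supporting_hyperplane_is_LPhi_kernel LPhi_kernel_is_supporting_hyperplane)+

end
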